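(* Let $(I,\preceq)$ be a finite poset with $|I|=n$, for each $i\in I$ let $X_i$ be a finite set with $|X_i|\ge 2$, let $\{p_i^0\}_{i\in I}$ be a strict probability measure on $I$, and let $\mathcal{P}$ be the generalized crested product defined by $(I,\preceq)$ and $\{p_i^0\}$ in which every factor chain is the uniform chain $U_i$ on $X_i$. Let $R\subseteq I$ and let $\widetilde{\mathcal{P}}$ be the lumped chain of $\mathcal{P}$ with respect to the partition of $X=\prod_{i\in I}X_i$ into classes of the relation $x\sim y\iff x_i=y_i$ for all $i\in I\setminus R$ (this chain is lumpable with respect to that partition); identify each class with the common value $(x_i)_{i\in I\setminus R}\in\prod_{i\in I\setminus R}X_i$. Then $$\widetilde{\mathcal{P}}=\sum_{i\in I}p_i^0\left(\bigotimes_{j\in H[i]\setminus R}U_j\right)\otimes\left(\bigotimes_{j\notin (H[i]\cup R)}I_j\right),$$ i.e. for $u,v\in\prod_{j\in I\setminus R}X_j$, $\widetilde{p}(u,v)=\sum_{i\in I}p_i^0\prod_{j\in H[i]\setminus R}\frac{1}{|X_j|}\prod_{j\in I\setminus (H[i]\cup R)}\delta(u_j,v_j)$.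
   Context: $H(i)=\{j\in I: j\prec i\}$, $H[i]=H(i)\sqcup\{i\}$. $U_j$ is the uniform Markov operator on $X_j$ (all matrix entries $1/|X_j|$), $I_j$ the identity operator on $X_j$, and $\delta$ the Kronecker delta. The generalized crested product with uniform factors is the Markov chain on $X$ with transition probabilities $p(x,y)=\sum_{i\in I}p_i^0\prod_{j\in H[i]}\frac{1}{|X_j|}\prod_{j\notin H[i]}\delta(x_j,y_j)$, i.e. operator $\sum_{i}p_i^0(\bigotimes_{j\in H[i]}U_j)\otimes(\bigotimes_{j\notin H[i]}I_j)$. If a chain $p$ is lumpable w.r.t. a partition $\mathcal{L}$ (i.e. $x\mapsto\sum_{y\in L'}p(x,y)$ is constant on each part $L$ for every part $L'$), the lumped chain on $\mathcal{L}$ has transition probabilities $\widetilde p(L,L')=\sum_{y\in L'}p(x,y)$ for any $x\in L$. *)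

theory Defs
  imports Complex_Main "HOL-Library.FuncSet"
begin

definition poset_on :: "'i set \<Rightarrow> ('i \<Rightarrow> 'i \<Rightarrow> bool) \<Rightarrow> bool" where
  "poset_on I le \<longleftrightarrow>
     (\<forall>i\<in>I. le i i) \<and>
     (\<forall>i\<in>I. \<forall>j\<in>I. le i j \<and> le j i \<longrightarrow> i = j) \<and>
     (\<forall>i\<in>I. \<forall>j\<in>I. \<forall>k\<in>I. le i j \<and> le j k \<longrightarrow> le i k)"

definition Hopen :: "'i set \<Rightarrow> ('i \<Rightarrow> 'i \<Rightarrow> bool) \<Rightarrow> 'i \<Rightarrow> 'i set" where
  "Hopen I le i = {j\<in>I. le j i \<and> j \<noteq> i}"

definition Hclosed :: "'i set \<Rightarrow> ('i \<Rightarrow> 'i \<Rightarrow> bool) \<Rightarrow> 'i \<Rightarrow> 'i set" where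
  "Hclosed I le i = Hopen I le i \<union> {i}"

definition kdelta :: "'a \<Rightarrow> 'a \<Rightarrow> real" where
  "kdelta a b = (if a = b then 1 else 0)"

text \<open>Generalized crested product with uniform factors U_i on X_i; states are
  elements of PiE I X (functions on I, undefined outside).\<close>
definition crested_uniform ::
  "'i set \<Rightarrow> ('i \<Rightarrow> 'i \<Rightarrow> bool) \<Rightarrow> ('i \<Rightarrow> 'a set) \<Rightarrow> ('i \<Rightarrow> real)
     \<Rightarrow> ('i \<Rightarrow> 'a) \<Rightarrow> ('i \<Rightarrow> 'a) \<Rightarrow> real" where
  "crested_uniform I le X p0 x y =
     (\<Sum>i\<in>I. p0 i * (\<Prod>j\<in>Hclosed I le i. 1 / real (card (X j)))
                 * (\<Prod>j\<in>I - Hclosed I le i. kdelta (x j) (y j)))"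

definition lumpable :: "'s set \<Rightarrow> ('s \<Rightarrow> 's \<Rightarrow> real) \<Rightarrow> 's set set \<Rightarrow> bool" where
  "lumpable S p Ls \<longleftrightarrow>
     (\<forall>L\<in>Ls. \<forall>L'\<in>Ls. \<forall>x\<in>L. \<forall>x'\<in>L. (\<Sum>y\<in>L'. p x y) = (\<Sum>y\<in>L'. p x' y))"

definition lumped :: "('s \<Rightarrow> 's \<Rightarrow> real) \<Rightarrow> 's set \<Rightarrow> 's set \<Rightarrow> real" where
  "lumped p L L' = (\<Sum>y\<in>L'. p (SOME x. x \<in> L) y)"

definition agree_off :: "('i \<Rightarrow> 'a) set \<Rightarrow> 'i set \<Rightarrow> 'i set \<Rightarrow> (('i \<Rightarrow> 'a) \<times> ('i \<Rightarrow> 'a)) set" where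
  "agree_off S I R = {(x, y). x \<in> S \<and> y \<in> S \<and> (\<forall>i\<in>I - R. x i = y i)}"

definition class_of :: "('i \<Rightarrow> 'a) set \<Rightarrow> 'i set \<Rightarrow> ('i \<Rightarrow> 'a) \<Rightarrow> ('i \<Rightarrow> 'a) set" where
  "class_of S J u = {x\<in>S. \<forall>j\<in>J. x j = u j}"

end

theory Submission
  imports Defs
begin

text \<open>Each summand of the crested product is a product over I of one-coordinate kernels, each
  of them stochastic (uniform or identity). Summing such a product over a lumping class, which
  fixes the coordinates outside R and leaves those in R free, factorizes coordinatewise; every
  free coordinate contributes its row sum 1, and what is left depends on the starting state only
  through its coordinates outside R. This gives lumpability and the stated formula at once.\<close>

lemma prod_if_Diff_eq:
  assumes "finite I" and "H \<subseteq> I"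
  shows "(\<Prod>j\<in>I - R. if j \<in> H then f j else g j) = (\<Prod>j\<in>H - R. f j) * (\<Prod>j\<in>I - (H \<union> R). g j)"
proof -
  have "(I - R) \<inter> {j. j \<in> H} = H - R" and "(I - R) \<inter> - {j. j \<in> H} = I - (H \<union> R)"
    using assms(2) by auto
  then show ?thesis
    using assms(1) by (simp add: prod.If_cases)
qed

text \<open>Row sums equal to 1 force finiteness of the free factors, so no finiteness hypothesis on
  X is needed.\<close>
lemma sum_PiE_prod_stochastic:
  fixes f :: "'i \<Rightarrow> 'a \<Rightarrow> real"
  assumes "finite I" and stoch: "\<forall>j\<in>I \<inter> R. (\<Sum>b\<in>X j. f j b) = 1"
  shows "(\<Sum>y\<in>PiE I (\<lambda>j. if j \<in> R then X j else {w j}). \<Prod>j\<in>I. f j (y j))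
       = (\<Prod>j\<in>I - R. f j (w j))"
proof -
  let ?X' = "\<lambda>j. if j \<in> R then X j else {w j}"
  have fin: "finite (?X' j)" if "j \<in> I" for j
  proof (cases "j \<in> R")
    case True
    then have "(\<Sum>b\<in>X j. f j b) \<noteq> 0"
      using stoch that by simp
    then show ?thesis
      using True sum.infinite by auto
  qed simp
  have "(\<Sum>y\<in>PiE I ?X'. \<Prod>j\<in>I. f j (y j)) = (\<Prod>j\<in>I. \<Sum>b\<in>?X' j. f j b)"
    by (rule prod_sum_PiE[OF \<open>finite I\<close> fin, symmetric])
  also have "\<dots> = (\<Prod>j\<in>I. if j \<in> R then 1 else f j (w j))"
    using stoch by (intro prod.cong) auto
  also have "\<dots> = (\<Prod>j\<in>I - R. f j (w j))"
    using \<open>finite I\<close> by (simp add: prod.If_cases Diff_eq)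
  finally show ?thesis .
qed

lemma Hclosed_subset: "i \<in> I \<Longrightarrow> Hclosed I le i \<subseteq> I"
  unfolding Hclosed_def Hopen_def by auto

lemma sum_kdelta_left: "finite A \<Longrightarrow> a \<in> A \<Longrightarrow> (\<Sum>b\<in>A. kdelta a b) = 1"
  unfolding kdelta_def by simp

lemma class_of_PiE_eq:
  assumes "w \<in> PiE (I - R) X"
  shows "class_of (PiE I X) (I - R) w = PiE I (\<lambda>j. if j \<in> R then X j else {w j})"
  using assms unfolding class_of_def PiE_def Pi_def extensional_def by auto

lemma class_of_nonempty:
  assumes "\<forall>i\<in>I. X i \<noteq> {}" and "w \<in> PiE (I - R) X"
  shows "class_of (PiE I X) (I - R) w \<noteq> {}"
  using assms by (simp add: class_of_PiE_eq PiE_eq_empty_iff)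

lemma restrict_in_class_of:
  assumes "x \<in> class_of (PiE I X) (I - R) w" and "w \<in> PiE (I - R) X"
  shows "restrict x (I - R) = w"
  using assms unfolding class_of_def by (auto simp: PiE_def extensional_def)

lemma agree_off_Image:
  "x \<in> PiE I X \<Longrightarrow>
     agree_off (PiE I X) I R `` {x} = class_of (PiE I X) (I - R) (restrict x (I - R))"
  unfolding agree_off_def class_of_def by auto

lemma quotient_agree_off:
  assumes "\<forall>i\<in>I. X i \<noteq> {}"
  shows "PiE I X // agree_off (PiE I X) I R = class_of (PiE I X) (I - R) ` PiE (I - R) X"
proof
  show "PiE I X // agree_off (PiE I X) I R \<subseteq> class_of (PiE I X) (I - R) ` PiE (I - R) X"
    unfolding quotient_def using agree_off_Image by fastforce
next
  show "class_of (PiE I X) (I - R) ` PiE (I - R) X \<subseteq> PiE I X // agree_off (PiE I X) I R"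
  proof
    fix L assume "L \<in> class_of (PiE I X) (I - R) ` PiE (I - R) X"
    then obtain w where w: "w \<in> PiE (I - R) X" and L: "L = class_of (PiE I X) (I - R) w"
      by blast
    then obtain x where x: "x \<in> L"
      using class_of_nonempty[OF assms w] by blast
    then have "x \<in> PiE I X"
      using L unfolding class_of_def by simp
    moreover have "L = agree_off (PiE I X) I R `` {x}"
      using agree_off_Image[OF \<open>x \<in> PiE I X\<close>] restrict_in_class_of[OF _ w] x L by simp
    ultimately show "L \<in> PiE I X // agree_off (PiE I X) I R"
      unfolding quotient_def by blast
  qed
qed

definition crested_uniform_lumped ::
  "'i set \<Rightarrow> ('i \<Rightarrow> 'i \<Rightarrow> bool) \<Rightarrow> ('i \<Rightarrow> 'a set) \<Rightarrow> ('i \<Rightarrow> real) \<Rightarrow> 'i set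
     \<Rightarrow> ('i \<Rightarrow> 'a) \<Rightarrow> ('i \<Rightarrow> 'a) \<Rightarrow> real" where
  "crested_uniform_lumped I le X p0 R u v =
     (\<Sum>i\<in>I. p0 i * (\<Prod>j\<in>Hclosed I le i - R. 1 / real (card (X j)))
                 * (\<Prod>j\<in>I - (Hclosed I le i \<union> R). kdelta (u j) (v j)))"

lemma crested_uniform_lumped_cong:
  assumes "\<forall>j\<in>I - R. u j = u' j"
  shows "crested_uniform_lumped I le X p0 R u v = crested_uniform_lumped I le X p0 R u' v"
  unfolding crested_uniform_lumped_def using assms
  by (intro sum.cong refl arg_cong2[where f = "(*)"] prod.cong) auto

lemma sum_class_of_crested_uniform:
  assumes "finite I" and X: "\<forall>i\<in>I. finite (X i) \<and> X i \<noteq> {}"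
    and x_class: "x \<in> class_of (PiE I X) (I - R) u" and w: "w \<in> PiE (I - R) X"
  shows "(\<Sum>y\<in>class_of (PiE I X) (I - R) w. crested_uniform I le X p0 x y)
       = crested_uniform_lumped I le X p0 R u w"
proof -
  have x: "x \<in> PiE I X" and x_agree: "\<forall>j\<in>I - R. x j = u j"
    using x_class unfolding class_of_def by auto
  let ?g = "\<lambda>i j b. if j \<in> Hclosed I le i then 1 / real (card (X j)) else kdelta (x j) b"
  have stoch: "(\<Sum>b\<in>X j. ?g i j b) = 1" if "j \<in> I" for i j
  proof (cases "j \<in> Hclosed I le i")
    case False
    then show ?thesis
      using X x that by (simp add: sum_kdelta_left PiE_mem)
  qed (use X that in simp)
  have summand: "(\<Prod>j\<in>Hclosed I le i. 1 / real (card (X j))) * (\<Prod>j\<in>I - Hclosed I le i. kdelta (x j) (y j))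
      = (\<Prod>j\<in>I. ?g i j (y j))" if "i \<in> I" for i y
    using prod_if_Diff_eq[OF \<open>finite I\<close> Hclosed_subset[OF that], where R = "{}"
        and f = "\<lambda>j. 1 / real (card (X j))" and g = "\<lambda>j. kdelta (x j) (y j)"]
    by simp
  have "(\<Sum>y\<in>class_of (PiE I X) (I - R) w. crested_uniform I le X p0 x y)
      = (\<Sum>y\<in>PiE I (\<lambda>j. if j \<in> R then X j else {w j}). \<Sum>i\<in>I. p0 i * (\<Prod>j\<in>I. ?g i j (y j)))"
    unfolding class_of_PiE_eq[OF w] crested_uniform_def
    by (intro sum.cong refl) (simp add: summand mult.assoc)
  also have "\<dots> = (\<Sum>i\<in>I. p0 i * (\<Sum>y\<in>PiE I (\<lambda>j. if j \<in> R then X j else {w j}). \<Prod>j\<in>I. ?g i j (y j)))"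
    by (subst sum.swap) (simp add: sum_distrib_left)
  also have "\<dots> = (\<Sum>i\<in>I. p0 i * (\<Prod>j\<in>I - R. ?g i j (w j)))"
    using sum_PiE_prod_stochastic[OF \<open>finite I\<close>, where f = "?g i" and R = R and w = w for i] stoch by simp
  also have "\<dots> = crested_uniform_lumped I le X p0 R x w"
    unfolding crested_uniform_lumped_def
  proof (intro sum.cong refl)
    fix i assume "i \<in> I"
    show "p0 i * (\<Prod>j\<in>I - R. ?g i j (w j))
        = p0 i * (\<Prod>j\<in>Hclosed I le i - R. 1 / real (card (X j)))
            * (\<Prod>j\<in>I - (Hclosed I le i \<union> R). kdelta (x j) (w j))"
      by (simp only: mult.assoc prod_if_Diff_eq[OF \<open>finite I\<close> Hclosed_subset[OF \<open>i \<in> I\<close>]])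
  qed
  also have "\<dots> = crested_uniform_lumped I le X p0 R u w"
    using x_agree by (rule crested_uniform_lumped_cong)
  finally show ?thesis .
qed

theorem proposition4:
  fixes I :: "'i set" and le :: "'i \<Rightarrow> 'i \<Rightarrow> bool"
    and X :: "'i \<Rightarrow> 'a set" and p0 :: "'i \<Rightarrow> real" and R :: "'i set"
  assumes "finite I" and "poset_on I le"
    and "\<forall>i\<in>I. finite (X i) \<and> card (X i) \<ge> 2"
    and "\<forall>i\<in>I. p0 i > 0" and "(\<Sum>i\<in>I. p0 i) = 1"
    and "R \<subseteq> I"
  shows "lumpable (PiE I X) (crested_uniform I le X p0)
           (PiE I X // agree_off (PiE I X) I R)
       \<and> (PiE I X // agree_off (PiE I X) I R)
           = (class_of (PiE I X) (I - R)) ` PiE (I - R) X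
       \<and> (\<forall>u\<in>PiE (I - R) X. \<forall>v\<in>PiE (I - R) X.
            lumped (crested_uniform I le X p0)
              (class_of (PiE I X) (I - R) u) (class_of (PiE I X) (I - R) v)
            = (\<Sum>i\<in>I. p0 i * (\<Prod>j\<in>Hclosed I le i - R. 1 / real (card (X j)))
                 * (\<Prod>j\<in>I - (Hclosed I le i \<union> R). kdelta (u j) (v j))))"
proof -
  let ?S = "PiE I X" and ?C = "class_of (PiE I X) (I - R)"
  have X: "\<forall>i\<in>I. finite (X i) \<and> X i \<noteq> {}"
    using assms(3) by fastforce
  note row_sum = sum_class_of_crested_uniform[OF assms(1) X]
  have quot: "?S // agree_off ?S I R = ?C ` PiE (I - R) X"
    using X by (simp add: quotient_agree_off)
  have "lumpable ?S (crested_uniform I le X p0) (?S // agree_off ?S I R)"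
    unfolding lumpable_def quot using row_sum by fastforce
  moreover have "lumped (crested_uniform I le X p0) (?C u) (?C v) = crested_uniform_lumped I le X p0 R u v"
    if "u \<in> PiE (I - R) X" and "v \<in> PiE (I - R) X" for u v
  proof -
    have "(SOME x. x \<in> ?C u) \<in> ?C u"
      using class_of_nonempty[OF _ that(1)] X by (simp add: some_in_eq)
    then show ?thesis
      unfolding lumped_def using row_sum that(2) by blast
  qed
  ultimately show ?thesis
    using quot by (simp add: crested_uniform_lumped_def)
qed

end
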